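(* Let $({\mathbf\Lambda}^\star,{\mathbf V}^\star)$ with ${\mathbf\Lambda}^\star,{\mathbf V}^\star\ge0$ be a minimizer of $F$ over pairs of entrywise nonnegative matrices. Then $\mathcal U_s(\pi_{{\mathbf\Lambda}^\star,{\mathbf V}^\star},\ell)\le\epsilon_s$ for all $s\in[K]$ and $\ell\in[\![L]\!]$.
   Context: Let $K\ge 2$, $d\ge1$, and let $(X,S,Y)$ be a random triple with values in $\mathbb R^d\times[K]\times\mathbb R$, $\mathbb E[Y^2]<\infty$. Put $\eta(x)=\mathbb E[Y\mid X=x]$, $p_s=\mathbb P(S=s)>0$, $\tau_s(x)=\mathbb P(S=s\mid X=x)$, $t_s(x)=1-\tau_s(x)/p_s$, $\mathbf t(x)=(t_s(x))_{s\in[K]}$. Fix $B>0$, $L\in\mathbb N$, $\beta>0$, $\boldsymbol\epsilon=(\epsilon_s)\in[0,1]^K$; $[\![L]\!]=\{-L,\dots,L\}$, $r_\ell(x)=(\eta(x)-\ell B/L)^2$. For a prediction $\pi$ supported on the grid $\{\ell B/L:\ell\in[\![L]\!]\}$ (i.e. a Markov kernel with $\pi(\ell\mid x)$ the mass at $\ell B/L$), $\mathcal U_s(\pi,\ell)=|\mathbb E[\pi(\ell\mid X)\mid S=s]-\mathbb E[\pi(\ell\mid X)]|$. $\mathrm{LSE}_\beta(\mathbf w)=\beta^{-1}\log\sum_j e^{\beta w_j}$, $\sigma_j(\mathbf w)=e^{w_j}/\sum_ie^{w_i}$. For ${\mathbf\Lambda}=(\lambda_{\ell s}),{\mathbf V}=(\nu_{\ell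 s})$ with rows $\boldsymbol\lambda_\ell,\boldsymbol\nu_\ell\in\mathbb R^K$: $F({\mathbf\Lambda},{\mathbf V})=\mathbb E\big[\mathrm{LSE}_\beta\big((\langle\boldsymbol\lambda_\ell-\boldsymbol\nu_\ell,\mathbf t(X)\rangle-r_\ell(X))_{\ell\in[\![L]\!]}\big)\big]+\sum_{\ell}\langle\boldsymbol\lambda_\ell+\boldsymbol\nu_\ell,\boldsymbol\epsilon\rangle$, and $\pi_{{\mathbf\Lambda},{\mathbf V}}(\ell\mid x)=\sigma_\ell\big(\beta(\langle\boldsymbol\lambda_{\ell'}-\boldsymbol\nu_{\ell'},\mathbf t(x)\rangle-r_{\ell'}(x))_{\ell'\in[\![L]\!]}\big)$. *)

theory Defs
  imports "HOL-Probability.Probability"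
begin

definition grid :: "nat \<Rightarrow> int set" where
  "grid L = {- int L .. int L}"

definition LSE :: "real \<Rightarrow> 'i set \<Rightarrow> ('i \<Rightarrow> real) \<Rightarrow> real" where
  "LSE \<beta> I w = (1 / \<beta>) * ln (\<Sum>j\<in>I. exp (\<beta> * w j))"

definition softmax :: "'i set \<Rightarrow> ('i \<Rightarrow> real) \<Rightarrow> 'i \<Rightarrow> real" where
  "softmax I w j = exp (w j) / (\<Sum>i\<in>I. exp (w i))"

definition tfun :: "(nat \<Rightarrow> 'x \<Rightarrow> real) \<Rightarrow> (nat \<Rightarrow> real) \<Rightarrow> nat \<Rightarrow> 'x \<Rightarrow> real" where
  "tfun \<tau> p s x = 1 - \<tau> s x / p s"

definition rfun :: "('x \<Rightarrow> real) \<Rightarrow> real \<Rightarrow> nat \<Rightarrow> int \<Rightarrow> 'x \<Rightarrow> real" where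
  "rfun \<eta> B L l x = (\<eta> x - real_of_int l * B / real L) ^ 2"

definition score :: "nat \<Rightarrow> ('x \<Rightarrow> real) \<Rightarrow> (nat \<Rightarrow> 'x \<Rightarrow> real) \<Rightarrow> (nat \<Rightarrow> real)
    \<Rightarrow> real \<Rightarrow> nat \<Rightarrow> (int \<Rightarrow> nat \<Rightarrow> real) \<Rightarrow> (int \<Rightarrow> nat \<Rightarrow> real) \<Rightarrow> 'x \<Rightarrow> int \<Rightarrow> real" where
  "score K \<eta> \<tau> p B L \<Lambda> V x l =
     (\<Sum>s\<in>{1..K}. (\<Lambda> l s - V l s) * tfun \<tau> p s x) - rfun \<eta> B L l x"

definition Fobj :: "'a measure \<Rightarrow> ('a \<Rightarrow> 'x) \<Rightarrow> nat \<Rightarrow> ('x \<Rightarrow> real) \<Rightarrow> (nat \<Rightarrow> 'x \<Rightarrow> real)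
    \<Rightarrow> (nat \<Rightarrow> real) \<Rightarrow> real \<Rightarrow> nat \<Rightarrow> real \<Rightarrow> (nat \<Rightarrow> real)
    \<Rightarrow> (int \<Rightarrow> nat \<Rightarrow> real) \<Rightarrow> (int \<Rightarrow> nat \<Rightarrow> real) \<Rightarrow> real" where
  "Fobj M X K \<eta> \<tau> p B L \<beta> \<epsilon> \<Lambda> V =
     (\<integral>\<omega>. LSE \<beta> (grid L) (score K \<eta> \<tau> p B L \<Lambda> V (X \<omega>)) \<partial>M)
     + (\<Sum>l\<in>grid L. \<Sum>s\<in>{1..K}. (\<Lambda> l s + V l s) * \<epsilon> s)"

definition pred :: "nat \<Rightarrow> ('x \<Rightarrow> real) \<Rightarrow> (nat \<Rightarrow> 'x \<Rightarrow> real) \<Rightarrow> (nat \<Rightarrow> real)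
    \<Rightarrow> real \<Rightarrow> nat \<Rightarrow> real \<Rightarrow> (int \<Rightarrow> nat \<Rightarrow> real) \<Rightarrow> (int \<Rightarrow> nat \<Rightarrow> real) \<Rightarrow> 'x \<Rightarrow> int \<Rightarrow> real" where
  "pred K \<eta> \<tau> p B L \<beta> \<Lambda> V x l =
     softmax (grid L) (\<lambda>l'. \<beta> * score K \<eta> \<tau> p B L \<Lambda> V x l') l"

text \<open>Unfairness U_s(pi, l) = |E[pi(l|X) | S = s] - E[pi(l|X)]|, where the
  conditional expectation given the event {S = s} is E[f 1_{S=s}] / P(S = s).\<close>
definition unfair :: "'a measure \<Rightarrow> ('a \<Rightarrow> 'x) \<Rightarrow> ('a \<Rightarrow> nat) \<Rightarrow> ('x \<Rightarrow> int \<Rightarrow> real) \<Rightarrow> nat \<Rightarrow> int \<Rightarrow> real" where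
  "unfair M X S \<pi> s l =
     \<bar>(\<integral>\<omega>. \<pi> (X \<omega>) l * indicator {\<omega>\<in>space M. S \<omega> = s} \<omega> \<partial>M) / measure M {\<omega>\<in>space M. S \<omega> = s}
      - (\<integral>\<omega>. \<pi> (X \<omega>) l \<partial>M)\<bar>"

end

theory Submission
  imports Defs
begin

(* Raising one coordinate Lambda*_ls or V*_ls of the minimizer by h > 0 keeps it feasible, shifts the
   l-th score by +h t_s(X) or -h t_s(X), and raises the penalty term by h eps_s.  Since the gradient of
   log-sum-exp is the softmax, F grows by at most +-h E[pi(l|X) t_s(X)] + h eps_s + O(h^2), so minimality
   forces |E[pi(l|X) t_s(X)]| <= eps_s.  As tau_s(X) is a version of P(S = s | X), this expectation is
   E[pi(l|X)] - E[pi(l|X) | S = s], i.e. plus or minus the unfairness. *)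

section \<open>Versions of conditional expectations\<close>

definition cond_exp_version :: "'a measure \<Rightarrow> ('a \<Rightarrow> 'b::topological_space) \<Rightarrow> ('a \<Rightarrow> real) \<Rightarrow> ('b \<Rightarrow> real) \<Rightarrow> bool" where
  "cond_exp_version M X Z g \<longleftrightarrow> (\<forall>A\<in>sets borel.
     (\<integral>\<omega>. Z \<omega> * indicator (X -` A \<inter> space M) \<omega> \<partial>M) = (\<integral>\<omega>. g (X \<omega>) * indicator (X -` A \<inter> space M) \<omega> \<partial>M))"

lemma subalgebra_vimage_algebra_borel:
  assumes "X \<in> borel_measurable M"
  shows "subalgebra M (vimage_algebra (space M) X borel)"
  using assms by (auto simp: subalgebra_def sets_vimage_algebra2 measurable_def)

lemma measurable_vimage_algebra_borel:
  assumes "X \<in> borel_measurable M"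
  shows "X \<in> borel_measurable (vimage_algebra (space M) X borel)"
  by (rule measurable_vimage_algebra1) (use assms in \<open>auto simp: measurable_def\<close>)

context
  fixes M :: "'a measure" and X :: "'a \<Rightarrow> 'b::topological_space" and Z :: "'a \<Rightarrow> real" and g :: "'b \<Rightarrow> real"
  assumes M: "finite_measure M" and X[measurable]: "X \<in> borel_measurable M"
    and Z: "integrable M Z" and g[measurable]: "g \<in> borel_measurable borel"
    and gX: "integrable M (\<lambda>\<omega>. g (X \<omega>))" and version: "cond_exp_version M X Z g"
begin

interpretation finite_measure M by (rule M)

interpretation finite_measure_subalgebra M "vimage_algebra (space M) X borel"
  by unfold_locales (rule subalgebra_vimage_algebra_borel[OF X])

lemma cond_exp_version_AE_eq:
  "AE \<omega> in M. real_cond_exp M (vimage_algebra (space M) X borel) Z \<omega> = g (X \<omega>)"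
proof (rule real_cond_exp_charact[OF _ Z gX])
  show "(\<lambda>\<omega>. g (X \<omega>)) \<in> borel_measurable (vimage_algebra (space M) X borel)"
    using measurable_comp[OF measurable_vimage_algebra_borel[OF X] g] by (simp add: o_def)
  fix A assume "A \<in> sets (vimage_algebra (space M) X borel)"
  then obtain B where "B \<in> sets borel" "A = X -` B \<inter> space M"
    by (auto simp: sets_vimage_algebra2)
  then show "(\<integral>\<omega>\<in>A. Z \<omega> \<partial>M) = (\<integral>\<omega>\<in>A. g (X \<omega>) \<partial>M)"
    using version by (simp add: cond_exp_version_def set_lebesgue_integral_def mult.commute)
qed

lemma cond_exp_version_square_integrable:
  assumes [measurable]: "Z \<in> borel_measurable M" and Z2: "integrable M (\<lambda>\<omega>. (Z \<omega>)\<^sup>2)"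
  shows "integrable M (\<lambda>\<omega>. (g (X \<omega>))\<^sup>2)"
proof -
  have "integrable M (\<lambda>\<omega>. (real_cond_exp M (vimage_algebra (space M) X borel) Z \<omega>)\<^sup>2)"
    by (rule integrable_convex_cond_exp[where I=UNIV, OF Z _ _ _ convex_power2]) (use Z2 in auto)
  then show ?thesis
    by (rule integrable_cong_AE_imp) (use cond_exp_version_AE_eq in auto)
qed

lemma cond_exp_version_bounds:
  assumes "AE \<omega> in M. a \<le> Z \<omega> \<and> Z \<omega> \<le> b"
  shows "AE \<omega> in M. a \<le> g (X \<omega>) \<and> g (X \<omega>) \<le> b"
proof -
  have "AE \<omega> in M. a \<le> real_cond_exp M (vimage_algebra (space M) X borel) Z \<omega>"
    by (rule real_cond_exp_ge_c[OF Z]) (use assms in auto)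
  moreover have "AE \<omega> in M. real_cond_exp M (vimage_algebra (space M) X borel) Z \<omega> \<le> b"
    by (rule real_cond_exp_le_c[OF Z]) (use assms in auto)
  ultimately show ?thesis
    using cond_exp_version_AE_eq by eventually_elim auto
qed

lemma cond_exp_version_integral_mult:
  assumes h[measurable]: "h \<in> borel_measurable borel" and h_bound: "\<And>x. \<bar>h x\<bar> \<le> c"
  shows "(\<integral>\<omega>. h (X \<omega>) * g (X \<omega>) \<partial>M) = (\<integral>\<omega>. h (X \<omega>) * Z \<omega> \<partial>M)"
proof -
  let ?F = "vimage_algebra (space M) X borel"
  have hF: "(\<lambda>\<omega>. h (X \<omega>)) \<in> borel_measurable ?F"
    using measurable_comp[OF measurable_vimage_algebra_borel[OF X] h] by (simp add: o_def)
  have "integrable M (\<lambda>\<omega>. h (X \<omega>) * Z \<omega>)"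
    by (rule Bochner_Integration.integrable_bound[where f="\<lambda>\<omega>. c * Z \<omega>"]) 
       (use Z in \<open>auto simp: abs_mult intro!: mult_right_mono order_trans[OF h_bound abs_ge_self]\<close>)
  then have "(\<integral>\<omega>. h (X \<omega>) * real_cond_exp M ?F Z \<omega> \<partial>M) = (\<integral>\<omega>. h (X \<omega>) * Z \<omega> \<partial>M)"
    using Z by (intro real_cond_exp_intg(2) hF) auto
  moreover have "(\<integral>\<omega>. h (X \<omega>) * real_cond_exp M ?F Z \<omega> \<partial>M) = (\<integral>\<omega>. h (X \<omega>) * g (X \<omega>) \<partial>M)"
    using cond_exp_version_AE_eq by (intro integral_cong_AE) auto
  ultimately show ?thesis by simp
qed

end

lemma cond_exp_version_indicator:
  assumes E: "{\<omega>\<in>space M. P \<omega>} \<in> sets M" and X: "X \<in> borel_measurable M"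
    and prob: "\<forall>A\<in>sets borel. measure M {\<omega>\<in>space M. P \<omega> \<and> X \<omega> \<in> A}
                 = (\<integral>\<omega>. g (X \<omega>) * indicator (X -` A \<inter> space M) \<omega> \<partial>M)"
  shows "cond_exp_version M X (indicator {\<omega>\<in>space M. P \<omega>}) g"
  unfolding cond_exp_version_def
proof
  fix A :: "'b set" assume A: "A \<in> sets borel"
  have "{\<omega>\<in>space M. P \<omega>} \<inter> (X -` A \<inter> space M) = {\<omega>\<in>space M. P \<omega> \<and> X \<omega> \<in> A}"
    by auto
  moreover have "{\<omega>\<in>space M. P \<omega>} \<inter> (X -` A \<inter> space M) \<in> sets M"
    using E X A by (intro sets.Int measurable_sets)
  ultimately have "(\<integral>\<omega>. indicator {\<omega>\<in>space M. P \<omega>} \<omega> * indicator (X -` A \<inter> space M) \<omega> \<partial>M)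
      = measure M {\<omega>\<in>space M. P \<omega> \<and> X \<omega> \<in> A}"
    by (simp add: indicator_inter_arith[symmetric])
  then show "(\<integral>\<omega>. indicator {\<omega>\<in>space M. P \<omega>} \<omega> * indicator (X -` A \<inter> space M) \<omega> \<partial>M)
      = (\<integral>\<omega>. g (X \<omega>) * indicator (X -` A \<inter> space M) \<omega> \<partial>M)"
    using prob A by simp
qed

section \<open>Log-sum-exp\<close>

lemma exp_le_quadratic:
  fixes x :: real
  assumes "x \<le> 1"
  shows "exp x \<le> 1 + x + x\<^sup>2"
proof (cases "x \<ge> 0")
  case True
  then show ?thesis using exp_bound assms by simp
next
  case False
  \<comment> \<open>with \<open>y = -x\<close> this says \<open>(1 - y + y\<^sup>2) e\<^sup>y \<ge> 1\<close>, which follows from \<open>e\<^sup>y \<ge> 1 + y + y\<^sup>2/2\<close>\<close>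
  define y where "y = - x"
  have y: "y > 0" using False by (simp add: y_def)
  have "1 \<le> (1 - y + y\<^sup>2) * (1 + y + y\<^sup>2 / 2)"
    using y by (simp add: field_simps power2_eq_square power3_eq_cube power4_eq_xxxx)
  also have "\<dots> \<le> (1 - y + y\<^sup>2) * exp y"
  proof (rule mult_left_mono)
    show "1 + y + y\<^sup>2 / 2 \<le> exp y" using exp_lower_Taylor_quadratic y by simp
    have "1 - y + y\<^sup>2 = (y - 1/2)\<^sup>2 + 3/4" by (simp add: power2_eq_square algebra_simps)
    then show "0 \<le> 1 - y + y\<^sup>2" by simp
  qed
  finally show ?thesis by (simp add: y_def exp_minus field_simps)
qed

lemma softmax_nonneg: "0 \<le> softmax I w j"
  unfolding softmax_def by (intro divide_nonneg_nonneg sum_nonneg) auto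

lemma softmax_le_1:
  assumes "finite I" "j \<in> I"
  shows "softmax I w j \<le> 1"
proof -
  have "exp (w j) \<le> (\<Sum>i\<in>I. exp (w i))"
    using assms by (intro member_le_sum) auto
  moreover have "0 < (\<Sum>i\<in>I. exp (w i))"
    using assms by (intro sum_pos) auto
  ultimately show ?thesis
    unfolding softmax_def by (simp add: divide_le_eq_1)
qed

lemma LSE_bump_le:
  fixes w :: "'i \<Rightarrow> real"
  assumes I: "finite I" "j \<in> I" and \<beta>: "\<beta> > 0" and \<delta>: "\<beta> * \<delta> \<le> 1"
  shows "LSE \<beta> I (\<lambda>i. w i + (if i = j then \<delta> else 0)) - LSE \<beta> I w
         \<le> softmax I (\<lambda>i. \<beta> * w i) j * \<delta> + \<beta> * \<delta>\<^sup>2"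
proof -
  define S where "S = (\<Sum>i\<in>I. exp (\<beta> * w i))"
  define \<pi> where "\<pi> = softmax I (\<lambda>i. \<beta> * w i) j"
  define q where "q = 1 + \<pi> * (exp (\<beta> * \<delta>) - 1)"
  have S: "S > 0" unfolding S_def using I by (intro sum_pos) auto
  have "(\<Sum>i\<in>I. exp (\<beta> * (w i + (if i = j then \<delta> else 0))))
      = (\<Sum>i\<in>I. exp (\<beta> * w i) + (if i = j then exp (\<beta> * w j) * (exp (\<beta> * \<delta>) - 1) else 0))"
    by (rule sum.cong) (auto simp: distrib_left exp_add algebra_simps)
  also have "\<dots> = S * q"
    using I S by (simp add: sum.distrib S_def q_def \<pi>_def softmax_def field_simps)
  finally have sum_bump: "(\<Sum>i\<in>I. exp (\<beta> * (w i + (if i = j then \<delta> else 0)))) = S * q" .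
  have "0 < S * q"
    unfolding sum_bump[symmetric] using I by (intro sum_pos) auto
  then have q: "q > 0" using S by (simp add: zero_less_mult_iff)
  have "LSE \<beta> I (\<lambda>i. w i + (if i = j then \<delta> else 0)) - LSE \<beta> I w = ln q / \<beta>"
    unfolding LSE_def sum_bump S_def[symmetric] using S q by (simp add: ln_mult add_divide_distrib)
  also have "\<dots> \<le> \<pi> * (exp (\<beta> * \<delta>) - 1) / \<beta>"
    using ln_le_minus_one[OF q] \<beta> by (simp add: q_def divide_right_mono)
  also have "\<dots> \<le> \<pi> * (\<beta> * \<delta> + (\<beta> * \<delta>)\<^sup>2) / \<beta>"
    using exp_le_quadratic[OF \<delta>] \<beta> softmax_nonneg[of I _ j]
    by (intro divide_right_mono mult_left_mono) (auto simp: \<pi>_def)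
  also have "\<dots> = \<pi> * \<delta> + \<pi> * (\<beta> * \<delta>\<^sup>2)"
    using \<beta> by (simp add: field_simps power2_eq_square)
  also have "\<dots> \<le> \<pi> * \<delta> + \<beta> * \<delta>\<^sup>2"
    by (intro add_left_mono mult_left_le_one_le)
       (use softmax_nonneg softmax_le_1[OF I] \<beta> in \<open>auto simp: \<pi>_def\<close>)
  finally show ?thesis by (simp add: \<pi>_def)
qed

lemma abs_LSE_le:
  fixes w :: "'i \<Rightarrow> real"
  assumes I: "finite I" "I \<noteq> {}" and \<beta>: "\<beta> > 0"
  shows "\<bar>LSE \<beta> I w\<bar> \<le> (\<Sum>i\<in>I. \<bar>w i\<bar>) + \<bar>ln (real (card I))\<bar> / \<beta>"
proof -
  define S where "S = (\<Sum>i\<in>I. exp (\<beta> * w i))"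
  define T where "T = (\<Sum>i\<in>I. \<bar>w i\<bar>)"
  obtain j where j: "j \<in> I" using I by auto
  have S: "S > 0" unfolding S_def using I j by (intro sum_pos) auto
  have abs_le_T: "\<bar>w i\<bar> \<le> T" if "i \<in> I" for i
    unfolding T_def using I that by (intro member_le_sum) auto
  have "exp (\<beta> * w j) \<le> S"
    unfolding S_def using I j by (intro member_le_sum) auto
  then have "\<beta> * w j \<le> ln S" using S by (simp add: ln_ge_iff)
  then have "w j \<le> LSE \<beta> I w"
    using \<beta> unfolding LSE_def S_def[symmetric] by (simp add: field_simps)
  then have lower: "- T \<le> LSE \<beta> I w"
    using abs_le_T[OF j] by linarith
  have "S \<le> (\<Sum>i\<in>I. exp (\<beta> * T))"
    unfolding S_def using abs_le_T \<beta> by (intro sum_mono) (simp add: mult_left_mono abs_le_iff)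
  also have "\<dots> = exp (ln (real (card I)) + \<beta> * T)"
    using I by (simp add: exp_add card_gt_0_iff)
  finally have "ln S \<le> ln (real (card I)) + \<beta> * T" using S by (metis exp_gt_zero ln_exp ln_le_cancel_iff)
  then have "LSE \<beta> I w \<le> ln (real (card I)) / \<beta> + T"
    unfolding LSE_def S_def[symmetric] using \<beta> by (simp add: field_simps)
  moreover have "ln (real (card I)) / \<beta> \<le> \<bar>ln (real (card I))\<bar> / \<beta>"
    using \<beta> by (intro divide_right_mono) auto
  moreover have "0 \<le> \<bar>ln (real (card I))\<bar> / \<beta>"
    using \<beta> by simp
  ultimately show ?thesis
    using lower unfolding T_def[symmetric] abs_le_iff by linarith
qed

lemma integrable_LSE:
  fixes f :: "'a \<Rightarrow> 'i \<Rightarrow> real"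
  assumes M: "finite_measure M" and I: "finite I" "I \<noteq> {}" and \<beta>: "\<beta> > 0"
    and f: "\<And>i. i \<in> I \<Longrightarrow> integrable M (\<lambda>\<omega>. f \<omega> i)"
  shows "integrable M (\<lambda>\<omega>. LSE \<beta> I (f \<omega>))"
proof (rule Bochner_Integration.integrable_bound)
  have [measurable]: "\<And>i. i \<in> I \<Longrightarrow> (\<lambda>\<omega>. f \<omega> i) \<in> borel_measurable M" using f by auto
  show "(\<lambda>\<omega>. LSE \<beta> I (f \<omega>)) \<in> borel_measurable M"
    unfolding LSE_def by measurable
  show "integrable M (\<lambda>\<omega>. (\<Sum>i\<in>I. \<bar>f \<omega> i\<bar>) + \<bar>ln (real (card I))\<bar> / \<beta>)"
    using f M by (intro Bochner_Integration.integrable_add integrable_sum integrable_abs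
        finite_measure.integrable_const) auto
  show "AE \<omega> in M. norm (LSE \<beta> I (f \<omega>)) \<le> norm ((\<Sum>i\<in>I. \<bar>f \<omega> i\<bar>) + \<bar>ln (real (card I))\<bar> / \<beta>)"
    using abs_LSE_le[OF I \<beta>] by (auto intro!: AE_I2 order_trans[OF _ abs_ge_self])
qed

lemma integral_LSE_bump_le:
  fixes f :: "'a \<Rightarrow> 'i \<Rightarrow> real"
  assumes M: "prob_space M" and I: "finite I" "j \<in> I" and \<beta>: "\<beta> > 0"
    and f: "\<And>i. i \<in> I \<Longrightarrow> integrable M (\<lambda>\<omega>. f \<omega> i)"
    and t: "integrable M t" and t_bound: "AE \<omega> in M. \<bar>t \<omega>\<bar> \<le> C"
    and u: "\<beta> * \<bar>u\<bar> * C \<le> 1"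
  shows "(\<integral>\<omega>. LSE \<beta> I (\<lambda>i. f \<omega> i + (if i = j then u * t \<omega> else 0)) \<partial>M) - (\<integral>\<omega>. LSE \<beta> I (f \<omega>) \<partial>M)
         \<le> u * (\<integral>\<omega>. softmax I (\<lambda>i. \<beta> * f \<omega> i) j * t \<omega> \<partial>M) + \<beta> * u\<^sup>2 * C\<^sup>2"
proof -
  interpret prob_space M by (rule M)
  have I_ne: "I \<noteq> {}" using I by auto
  have [measurable]: "t \<in> borel_measurable M" "\<And>i. i \<in> I \<Longrightarrow> (\<lambda>\<omega>. f \<omega> i) \<in> borel_measurable M"
    using t f by auto
  have int_bumped: "integrable M (\<lambda>\<omega>. LSE \<beta> I (\<lambda>i. f \<omega> i + (if i = j then u * t \<omega> else 0)))"
  proof (rule integrable_LSE[OF finite_measure_axioms I(1) I_ne \<beta>])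
    fix i assume "i \<in> I"
    then show "integrable M (\<lambda>\<omega>. f \<omega> i + (if i = j then u * t \<omega> else 0))"
      using f t by (cases "i = j") auto
  qed
  have int: "integrable M (\<lambda>\<omega>. LSE \<beta> I (f \<omega>))"
    using f by (intro integrable_LSE[OF finite_measure_axioms I(1) I_ne \<beta>])
  have int_softmax: "integrable M (\<lambda>\<omega>. softmax I (\<lambda>i. \<beta> * f \<omega> i) j * t \<omega>)"
  proof (rule Bochner_Integration.integrable_bound[OF t])
    show "(\<lambda>\<omega>. softmax I (\<lambda>i. \<beta> * f \<omega> i) j * t \<omega>) \<in> borel_measurable M"
      unfolding softmax_def using I by measurable
    show "AE \<omega> in M. norm (softmax I (\<lambda>i. \<beta> * f \<omega> i) j * t \<omega>) \<le> norm (t \<omega>)"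
      by (intro AE_I2) (simp add: abs_mult mult_left_le_one_le softmax_nonneg softmax_le_1[OF I])
  qed
  have "AE \<omega> in M. LSE \<beta> I (\<lambda>i. f \<omega> i + (if i = j then u * t \<omega> else 0)) - LSE \<beta> I (f \<omega>)
      \<le> u * (softmax I (\<lambda>i. \<beta> * f \<omega> i) j * t \<omega>) + \<beta> * u\<^sup>2 * C\<^sup>2"
    using t_bound
  proof eventually_elim
    case (elim \<omega>)
    have "u * t \<omega> \<le> \<bar>u\<bar> * C"
      using elim abs_ge_self[of "u * t \<omega>"] mult_left_mono[OF elim abs_ge_zero[of u]]
      by (simp add: abs_mult)
    then have "\<beta> * (u * t \<omega>) \<le> \<beta> * (\<bar>u\<bar> * C)"
      using \<beta> by (intro mult_left_mono) auto
    then have "\<beta> * (u * t \<omega>) \<le> 1"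
      using u by (simp add: mult.assoc)
    then have "LSE \<beta> I (\<lambda>i. f \<omega> i + (if i = j then u * t \<omega> else 0)) - LSE \<beta> I (f \<omega>)
        \<le> softmax I (\<lambda>i. \<beta> * f \<omega> i) j * (u * t \<omega>) + \<beta> * (u * t \<omega>)\<^sup>2"
      by (rule LSE_bump_le[OF I \<beta>])
    also have "\<beta> * (u * t \<omega>)\<^sup>2 \<le> \<beta> * u\<^sup>2 * C\<^sup>2"
      using power_mono[OF elim abs_ge_zero, of 2] \<beta> by (simp add: power_mult_distrib mult_left_mono)
    finally show ?case by (simp add: algebra_simps)
  qed
  then have "(\<integral>\<omega>. LSE \<beta> I (\<lambda>i. f \<omega> i + (if i = j then u * t \<omega> else 0)) - LSE \<beta> I (f \<omega>) \<partial>M)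
      \<le> (\<integral>\<omega>. u * (softmax I (\<lambda>i. \<beta> * f \<omega> i) j * t \<omega>) + \<beta> * u\<^sup>2 * C\<^sup>2 \<partial>M)"
    using int_bumped int int_softmax by (intro integral_mono_AE) auto
  then show ?thesis
    using int_bumped int int_softmax by (simp add: prob_space)
qed

section \<open>The dual objective\<close>

definition bump :: "(int \<Rightarrow> nat \<Rightarrow> real) \<Rightarrow> int \<Rightarrow> nat \<Rightarrow> real \<Rightarrow> int \<Rightarrow> nat \<Rightarrow> real" where
  "bump \<Lambda> l s a = (\<lambda>l' s'. \<Lambda> l' s' + (if l' = l \<and> s' = s then a else 0))"

lemma score_bump:
  assumes "s \<in> {1..K}"
  shows "score K \<eta> \<tau> p B L (bump \<Lambda> l s a) (bump V l s b) x l'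
       = score K \<eta> \<tau> p B L \<Lambda> V x l' + (if l' = l then (a - b) * tfun \<tau> p s x else 0)"
proof -
  have "(\<Sum>k\<in>{1..K}. (bump \<Lambda> l s a l' k - bump V l s b l' k) * tfun \<tau> p k x)
      = (\<Sum>k\<in>{1..K}. (\<Lambda> l' k - V l' k) * tfun \<tau> p k x
           + (if l' = l \<and> k = s then (a - b) * tfun \<tau> p s x else 0))"
    by (intro sum.cong) (auto simp: bump_def algebra_simps)
  then show ?thesis
    using assms by (simp add: score_def sum.distrib)
qed

lemma penalty_bump:
  assumes s: "s \<in> {1..K}" and l: "l \<in> grid L"
  shows "(\<Sum>l'\<in>grid L. \<Sum>k\<in>{1..K}. (bump \<Lambda> l s a l' k + bump V l s b l' k) * \<epsilon> k)
       = (\<Sum>l'\<in>grid L. \<Sum>k\<in>{1..K}. (\<Lambda> l' k + V l' k) * \<epsilon> k) + (a + b) * \<epsilon> s"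
proof -
  have row: "(\<Sum>k\<in>{1..K}. (bump \<Lambda> l s a l' k + bump V l s b l' k) * \<epsilon> k)
      = (\<Sum>k\<in>{1..K}. (\<Lambda> l' k + V l' k) * \<epsilon> k) + (if l' = l then (a + b) * \<epsilon> s else 0)" for l'
  proof (cases "l' = l")
    case True
    have "(\<Sum>k\<in>{1..K}. (bump \<Lambda> l s a l' k + bump V l s b l' k) * \<epsilon> k)
        = (\<Sum>k\<in>{1..K}. (\<Lambda> l' k + V l' k) * \<epsilon> k + (if k = s then (a + b) * \<epsilon> s else 0))"
      using True by (intro sum.cong) (auto simp: bump_def algebra_simps)
    then show ?thesis
      using True s by (simp add: sum.distrib)
  qed (simp add: bump_def)
  show ?thesis
    unfolding row using l by (simp add: sum.distrib grid_def)
qed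

lemma Fobj_bump:
  assumes "s \<in> {1..K}" "l \<in> grid L"
  shows "Fobj M X K \<eta> \<tau> p B L \<beta> \<epsilon> (bump \<Lambda> l s a) (bump V l s b)
       = (\<integral>\<omega>. LSE \<beta> (grid L) (\<lambda>l'. score K \<eta> \<tau> p B L \<Lambda> V (X \<omega>) l'
                 + (if l' = l then (a - b) * tfun \<tau> p s (X \<omega>) else 0)) \<partial>M)
         + (\<Sum>l'\<in>grid L. \<Sum>k\<in>{1..K}. (\<Lambda> l' k + V l' k) * \<epsilon> k) + (a + b) * \<epsilon> s"
proof -
  have "score K \<eta> \<tau> p B L (bump \<Lambda> l s a) (bump V l s b) x
      = (\<lambda>l'. score K \<eta> \<tau> p B L \<Lambda> V x l' + (if l' = l then (a - b) * tfun \<tau> p s x else 0))" for x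
    by (rule ext) (rule score_bump[OF assms(1)])
  then show ?thesis
    unfolding Fobj_def penalty_bump[OF assms] by simp
qed

lemma abs_le_if_first_order:
  fixes a e c \<delta> :: real
  assumes \<delta>: "\<delta> > 0" and c: "c \<ge> 0"
    and first_order: "\<And>u. \<bar>u\<bar> \<le> \<delta> \<Longrightarrow> 0 \<le> u * a + \<bar>u\<bar> * e + u\<^sup>2 * c"
  shows "\<bar>a\<bar> \<le> e"
proof -
  have "\<sigma> * a \<le> e" if \<sigma>: "\<bar>\<sigma>\<bar> = 1" for \<sigma>
  proof (rule field_le_epsilon)
    fix \<epsilon> :: real assume \<epsilon>: "\<epsilon> > 0"
    define h where "h = min \<delta> (\<epsilon> / (c + 1))"
    have h: "0 < h" "h \<le> \<delta>"
      using \<delta> \<epsilon> c by (auto simp: h_def)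
    have "h * c \<le> \<epsilon> / (c + 1) * c"
      using c by (intro mult_right_mono) (auto simp: h_def)
    also have "\<dots> \<le> \<epsilon>"
      using c \<epsilon> by (simp add: field_simps)
    finally have hc: "h * c \<le> \<epsilon>" .
    have "0 \<le> (- \<sigma> * h) * a + \<bar>- \<sigma> * h\<bar> * e + (- \<sigma> * h)\<^sup>2 * c"
      using first_order[of "- \<sigma> * h"] h \<sigma> by (simp add: abs_mult)
    also have "\<dots> = h * (e + h * c - \<sigma> * a)"
      using h abs_mult_self_eq[of \<sigma>] \<sigma> by (simp add: abs_mult power2_eq_square algebra_simps)
    finally have "\<sigma> * a \<le> e + h * c"
      using h by (simp add: zero_le_mult_iff)
    then show "\<sigma> * a \<le> e + \<epsilon>"
      using hc by linarith
  qed
  from this[of 1] this[of "-1"] show ?thesis by auto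
qed

lemma minimizer_first_order:
  fixes M :: "'a measure" and X :: "'a \<Rightarrow> 'x"
  assumes M: "prob_space M" and \<beta>: "\<beta> > 0" and s: "s \<in> {1..K}" and l: "l \<in> grid L"
    and score_int: "\<And>\<Lambda> V l'. integrable M (\<lambda>\<omega>. score K \<eta> \<tau> p B L \<Lambda> V (X \<omega>) l')"
    and t_int: "integrable M (\<lambda>\<omega>. tfun \<tau> p s (X \<omega>))"
    and t_bound: "AE \<omega> in M. \<bar>tfun \<tau> p s (X \<omega>)\<bar> \<le> C" and C: "C > 0"
    and nonneg_star: "\<forall>l\<in>grid L. \<forall>s\<in>{1..K}. \<Lambda>s l s \<ge> 0 \<and> Vs l s \<ge> 0"
    and minimizer: "\<forall>\<Lambda> V. (\<forall>l\<in>grid L. \<forall>s\<in>{1..K}. \<Lambda> l s \<ge> 0 \<and> V l s \<ge> 0) \<longrightarrow>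
        Fobj M X K \<eta> \<tau> p B L \<beta> \<epsilon> \<Lambda>s Vs \<le> Fobj M X K \<eta> \<tau> p B L \<beta> \<epsilon> \<Lambda> V"
  shows "\<bar>\<integral>\<omega>. pred K \<eta> \<tau> p B L \<beta> \<Lambda>s Vs (X \<omega>) l * tfun \<tau> p s (X \<omega>) \<partial>M\<bar> \<le> \<epsilon> s"
proof (rule abs_le_if_first_order)
  show "1 / (\<beta> * C) > 0" "\<beta> * C\<^sup>2 \<ge> 0"
    using \<beta> C by auto
  fix u :: real assume u: "\<bar>u\<bar> \<le> 1 / (\<beta> * C)"
  let ?f = "\<lambda>\<omega>. score K \<eta> \<tau> p B L \<Lambda>s Vs (X \<omega>)"
  let ?t = "\<lambda>\<omega>. tfun \<tau> p s (X \<omega>)"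
  let ?LSE_bumped = "\<integral>\<omega>. LSE \<beta> (grid L) (\<lambda>l'. ?f \<omega> l' + (if l' = l then u * ?t \<omega> else 0)) \<partial>M"
  \<comment> \<open>raising \<open>\<Lambda>s l s\<close> (if \<open>u \<ge> 0\<close>) or \<open>Vs l s\<close> (if \<open>u < 0\<close>) stays feasible and moves the score by \<open>u t\<^sub>s\<close>\<close>
  define a b where "a = max u 0" and "b = max (- u) 0"
  have ab: "a - b = u" "a + b = \<bar>u\<bar>" "a \<ge> 0" "b \<ge> 0"
    by (auto simp: a_def b_def)
  have "Fobj M X K \<eta> \<tau> p B L \<beta> \<epsilon> \<Lambda>s Vs \<le> Fobj M X K \<eta> \<tau> p B L \<beta> \<epsilon> (bump \<Lambda>s l s a) (bump Vs l s b)"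
    using minimizer nonneg_star ab by (auto simp: bump_def)
  also have "\<dots> = ?LSE_bumped + (\<Sum>l'\<in>grid L. \<Sum>k\<in>{1..K}. (\<Lambda>s l' k + Vs l' k) * \<epsilon> k) + \<bar>u\<bar> * \<epsilon> s"
    unfolding Fobj_bump[OF s l] ab(1,2) ..
  finally have "(\<integral>\<omega>. LSE \<beta> (grid L) (?f \<omega>) \<partial>M) \<le> ?LSE_bumped + \<bar>u\<bar> * \<epsilon> s"
    unfolding Fobj_def by simp
  moreover have "?LSE_bumped - (\<integral>\<omega>. LSE \<beta> (grid L) (?f \<omega>) \<partial>M)
      \<le> u * (\<integral>\<omega>. pred K \<eta> \<tau> p B L \<beta> \<Lambda>s Vs (X \<omega>) l * ?t \<omega> \<partial>M) + \<beta> * u\<^sup>2 * C\<^sup>2"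
    unfolding pred_def
  proof (rule integral_LSE_bump_le[OF M _ l \<beta> score_int t_int t_bound])
    show "finite (grid L)" by (simp add: grid_def)
    have "\<beta> * \<bar>u\<bar> * C \<le> \<beta> * (1 / (\<beta> * C)) * C"
      using u \<beta> C by (intro mult_right_mono mult_left_mono) auto
    then show "\<beta> * \<bar>u\<bar> * C \<le> 1"
      using \<beta> C by simp
  qed
  ultimately show "0 \<le> u * (\<integral>\<omega>. pred K \<eta> \<tau> p B L \<beta> \<Lambda>s Vs (X \<omega>) l * ?t \<omega> \<partial>M)
      + \<bar>u\<bar> * \<epsilon> s + u\<^sup>2 * (\<beta> * C\<^sup>2)"
    by (simp add: algebra_simps)
qed

lemma abs_tfun_le:
  assumes "0 \<le> \<tau> s x" "\<tau> s x \<le> 1" "p s > 0"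
  shows "\<bar>tfun \<tau> p s x\<bar> \<le> 1 + 1 / p s"
proof -
  have "\<tau> s x / p s \<le> 1 / p s"
    using assms by (intro divide_right_mono) auto
  moreover have "0 \<le> \<tau> s x / p s"
    using assms by simp
  ultimately show ?thesis
    unfolding tfun_def by (simp add: abs_le_iff)
qed

lemma integrable_tfun:
  assumes "finite_measure M" "integrable M (\<lambda>\<omega>. \<tau> s (X \<omega>))"
  shows "integrable M (\<lambda>\<omega>. tfun \<tau> p s (X \<omega>))"
  unfolding tfun_def using assms
  by (intro Bochner_Integration.integrable_diff integrable_divide finite_measure.integrable_const) auto

lemma integrable_score:
  assumes M: "finite_measure M"
    and \<tau>: "\<And>k. k \<in> {1..K} \<Longrightarrow> integrable M (\<lambda>\<omega>. \<tau> k (X \<omega>))"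
    and \<eta>: "integrable M (\<lambda>\<omega>. \<eta> (X \<omega>))" "integrable M (\<lambda>\<omega>. (\<eta> (X \<omega>))\<^sup>2)"
  shows "integrable M (\<lambda>\<omega>. score K \<eta> \<tau> p B L \<Lambda> V (X \<omega>) l)"
proof -
  have "integrable M (\<lambda>\<omega>. tfun \<tau> p k (X \<omega>))" if "k \<in> {1..K}" for k
    using M \<tau>[OF that] by (rule integrable_tfun)
  moreover have "integrable M (\<lambda>\<omega>. rfun \<eta> B L l (X \<omega>))"
    unfolding rfun_def power2_diff using \<eta>
    using M by (intro Bochner_Integration.integrable_diff Bochner_Integration.integrable_add
        integrable_mult_left integrable_mult_right finite_measure.integrable_const) auto
  ultimately show ?thesis
    unfolding score_def by (intro Bochner_Integration.integrable_diff integrable_sum integrable_mult_right) auto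
qed

lemma borel_measurable_pred:
  assumes [measurable]: "\<And>k. k \<in> {1..K} \<Longrightarrow> \<tau> k \<in> borel_measurable borel" "\<eta> \<in> borel_measurable borel"
  shows "(\<lambda>x. pred K \<eta> \<tau> p B L \<beta> \<Lambda> V x l) \<in> borel_measurable borel"
  unfolding pred_def softmax_def score_def tfun_def rfun_def by measurable

lemma abs_pred_le_1:
  assumes "l \<in> grid L"
  shows "\<bar>pred K \<eta> \<tau> p B L \<beta> \<Lambda> V x l\<bar> \<le> 1"
proof -
  have "0 \<le> pred K \<eta> \<tau> p B L \<beta> \<Lambda> V x l" "pred K \<eta> \<tau> p B L \<beta> \<Lambda> V x l \<le> 1"
    unfolding pred_def using assms by (auto intro: softmax_nonneg softmax_le_1 simp: grid_def)
  then show ?thesis by simp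
qed

lemma unfair_eq_abs_integral_tfun:
  fixes M :: "'a measure" and X :: "'a \<Rightarrow> 'b::topological_space" and S :: "'a \<Rightarrow> nat" and s :: nat
    and \<pi> :: "'b \<Rightarrow> int \<Rightarrow> real"
  defines "E \<equiv> {\<omega>\<in>space M. S \<omega> = s}"
  assumes M: "finite_measure M" and X[measurable]: "X \<in> borel_measurable M" and E: "E \<in> sets M"
    and version: "cond_exp_version M X (indicator E) (\<tau> s)"
    and \<tau>[measurable]: "\<tau> s \<in> borel_measurable borel" and \<tau>X: "integrable M (\<lambda>\<omega>. \<tau> s (X \<omega>))"
    and \<pi>[measurable]: "(\<lambda>x. \<pi> x l) \<in> borel_measurable borel" and \<pi>_bound: "\<And>x. \<bar>\<pi> x l\<bar> \<le> 1"
    and p: "p s = measure M E"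
  shows "unfair M X S \<pi> s l = \<bar>\<integral>\<omega>. \<pi> (X \<omega>) l * tfun \<tau> p s (X \<omega>) \<partial>M\<bar>"
proof -
  interpret finite_measure M by (rule M)
  have int_\<pi>: "integrable M (\<lambda>\<omega>. \<pi> (X \<omega>) l)"
    by (rule Bochner_Integration.integrable_bound[where f="\<lambda>_. 1::real"]) (use \<pi>_bound in auto)
  have int_\<pi>\<tau>: "integrable M (\<lambda>\<omega>. \<pi> (X \<omega>) l * \<tau> s (X \<omega>))"
    by (rule Bochner_Integration.integrable_bound[OF \<tau>X])
       (use \<pi>_bound in \<open>auto simp: abs_mult intro!: mult_left_le_one_le\<close>)
  have "(\<integral>\<omega>. \<pi> (X \<omega>) l * \<tau> s (X \<omega>) \<partial>M) = (\<integral>\<omega>. \<pi> (X \<omega>) l * indicator E \<omega> \<partial>M)"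
    using E by (intro cond_exp_version_integral_mult[OF M X _ \<tau> \<tau>X version \<pi> \<pi>_bound])
      (auto simp: less_top[symmetric])
  moreover have "(\<integral>\<omega>. \<pi> (X \<omega>) l * tfun \<tau> p s (X \<omega>) \<partial>M)
      = (\<integral>\<omega>. \<pi> (X \<omega>) l \<partial>M) - (\<integral>\<omega>. \<pi> (X \<omega>) l * \<tau> s (X \<omega>) \<partial>M) / p s"
    using int_\<pi> int_\<pi>\<tau> by (simp add: tfun_def right_diff_distrib)
  ultimately show ?thesis
    unfolding unfair_def E_def[symmetric] p by (simp add: abs_minus_commute)
qed

theorem lemma3p2:
  fixes M :: "'a measure"
    and X :: "'a \<Rightarrow> real ^ 'd" and S :: "'a \<Rightarrow> nat" and Y :: "'a \<Rightarrow> real"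
    and K L :: nat and B \<beta> :: real and \<epsilon> :: "nat \<Rightarrow> real"
    and \<eta> :: "real ^ 'd \<Rightarrow> real" and \<tau> :: "nat \<Rightarrow> real ^ 'd \<Rightarrow> real" and p :: "nat \<Rightarrow> real"
    and \<Lambda>s Vs :: "int \<Rightarrow> nat \<Rightarrow> real"
  assumes M: "prob_space M"
    and X_meas: "X \<in> borel_measurable M"
    and S_meas: "S \<in> measurable M (count_space UNIV)"
    and S_range: "\<forall>\<omega>\<in>space M. S \<omega> \<in> {1..K}"
    and Y_meas: "Y \<in> borel_measurable M"
    and Y_L2: "integrable M (\<lambda>\<omega>. (Y \<omega>)\<^sup>2)"
    and K: "K \<ge> 2" and L: "L \<ge> 1" and B: "B > 0" and \<beta>: "\<beta> > 0"
    and \<epsilon>: "\<forall>s\<in>{1..K}. 0 \<le> \<epsilon> s \<and> \<epsilon> s \<le> 1"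
    and p_def: "\<forall>s\<in>{1..K}. p s = measure M {\<omega>\<in>space M. S \<omega> = s}"
    and p_pos: "\<forall>s\<in>{1..K}. p s > 0"
    \<comment> \<open>eta(x) = E[Y | X = x]: a Borel version of the conditional expectation\<close>
    and \<eta>_meas: "\<eta> \<in> borel_measurable borel"
    and \<eta>_int: "integrable M (\<lambda>\<omega>. \<eta> (X \<omega>))"
    and \<eta>_ce: "\<forall>A\<in>sets borel.
        (\<integral>\<omega>. Y \<omega> * indicator (X -` A \<inter> space M) \<omega> \<partial>M)
      = (\<integral>\<omega>. \<eta> (X \<omega>) * indicator (X -` A \<inter> space M) \<omega> \<partial>M)"
    \<comment> \<open>tau_s(x) = P(S = s | X = x): a Borel version of the conditional probability\<close>
    and \<tau>_meas: "\<forall>s\<in>{1..K}. \<tau> s \<in> borel_measurable borel"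
    and \<tau>_int: "\<forall>s\<in>{1..K}. integrable M (\<lambda>\<omega>. \<tau> s (X \<omega>))"
    and \<tau>_ce: "\<forall>s\<in>{1..K}. \<forall>A\<in>sets borel.
        measure M {\<omega>\<in>space M. S \<omega> = s \<and> X \<omega> \<in> A}
      = (\<integral>\<omega>. \<tau> s (X \<omega>) * indicator (X -` A \<inter> space M) \<omega> \<partial>M)"
    and nonneg_star: "\<forall>l\<in>grid L. \<forall>s\<in>{1..K}. \<Lambda>s l s \<ge> 0 \<and> Vs l s \<ge> 0"
    and minimizer: "\<forall>\<Lambda> V. (\<forall>l\<in>grid L. \<forall>s\<in>{1..K}. \<Lambda> l s \<ge> 0 \<and> V l s \<ge> 0) \<longrightarrow>
        Fobj M X K \<eta> \<tau> p B L \<beta> \<epsilon> \<Lambda>s Vs \<le> Fobj M X K \<eta> \<tau> p B L \<beta> \<epsilon> \<Lambda> V"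
  shows "\<forall>s\<in>{1..K}. \<forall>l\<in>grid L.
           unfair M X S (pred K \<eta> \<tau> p B L \<beta> \<Lambda>s Vs) s l \<le> \<epsilon> s"
proof (intro ballI)
  fix s l assume s: "s \<in> {1..K}" and l: "l \<in> grid L"
  interpret prob_space M by (rule M)
  have E: "{\<omega>\<in>space M. S \<omega> = s} \<in> sets M"
    using S_meas by measurable
  have \<tau>_s: "\<tau> s \<in> borel_measurable borel" "integrable M (\<lambda>\<omega>. \<tau> s (X \<omega>))"
    using \<tau>_meas \<tau>_int s by auto
  have version: "cond_exp_version M X (indicator {\<omega>\<in>space M. S \<omega> = s}) (\<tau> s)"
    using \<tau>_ce s by (intro cond_exp_version_indicator[OF E X_meas]) auto
  have "AE \<omega> in M. 0 \<le> \<tau> s (X \<omega>) \<and> \<tau> s (X \<omega>) \<le> 1"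
    using E by (intro cond_exp_version_bounds[OF finite_measure_axioms X_meas _ \<tau>_s version])
      (auto simp: less_top[symmetric])
  then have t_bound: "AE \<omega> in M. \<bar>tfun \<tau> p s (X \<omega>)\<bar> \<le> 1 + 1 / p s"
    by eventually_elim (use p_pos s in \<open>auto intro: abs_tfun_le\<close>)
  have "cond_exp_version M X Y \<eta>"
    using \<eta>_ce unfolding cond_exp_version_def .
  then have "integrable M (\<lambda>\<omega>. (\<eta> (X \<omega>))\<^sup>2)"
    using square_integrable_imp_integrable[OF Y_meas Y_L2]
    by (intro cond_exp_version_square_integrable[OF finite_measure_axioms X_meas _ \<eta>_meas \<eta>_int _ Y_meas Y_L2])
  then have score_int: "\<And>\<Lambda> V l'. integrable M (\<lambda>\<omega>. score K \<eta> \<tau> p B L \<Lambda> V (X \<omega>) l')"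
    using \<tau>_int \<eta>_int by (intro integrable_score[OF finite_measure_axioms]) auto
  have "unfair M X S (pred K \<eta> \<tau> p B L \<beta> \<Lambda>s Vs) s l
      = \<bar>\<integral>\<omega>. pred K \<eta> \<tau> p B L \<beta> \<Lambda>s Vs (X \<omega>) l * tfun \<tau> p s (X \<omega>) \<partial>M\<bar>"
    using \<tau>_meas \<eta>_meas p_def s
    by (intro unfair_eq_abs_integral_tfun[where \<tau>=\<tau>, OF finite_measure_axioms X_meas E version \<tau>_s]
        borel_measurable_pred abs_pred_le_1[OF l]) auto
  also have "\<dots> \<le> \<epsilon> s"
    using p_pos s
    by (intro minimizer_first_order[OF M \<beta> s l score_int integrable_tfun[where \<tau>=\<tau>, OF finite_measure_axioms \<tau>_s(2)]
        t_bound _ nonneg_star minimizer]) (auto intro: add_pos_pos)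
  finally show "unfair M X S (pred K \<eta> \<tau> p B L \<beta> \<Lambda>s Vs) s l \<le> \<epsilon> s" .
qed

end
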